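(* Let $n\ge1$ and let $\lambda,\lambda_1,\dots,\lambda_{n+1}$ be real numbers with $|\lambda|<|\lambda_1|\le|\lambda_2|\le\cdots\le|\lambda_{n+1}|$. Then there exist no matrix $\mathbf U\in U(n,1)$ and complex number $c$ such that $\mathbf U\cdot\mathrm{diag}(\lambda,\lambda_2,\dots,\lambda_{n+1})\cdot\mathbf U^t=c\cdot\mathrm{diag}(\lambda_1,\lambda_2,\dots,\lambda_{n+1})$.
   Context: $U(n,1)$ denotes the group of $(n+1)\times(n+1)$ complex matrices $\mathbf U$ with $\mathbf U J\overline{\mathbf U}^t=J$, where $J=\mathrm{diag}(1,\dots,1,-1)$; $\mathbf U^t$ is the transpose. *)

theory Defs
  imports Complex_Main "Jordan_Normal_Form.Matrix"
begin

definition J_mat :: "nat \<Rightarrow> complex mat" where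
  "J_mat n = mat (n+1) (n+1) (\<lambda>(i,j). if i = j then (if i = n then -1 else 1) else 0)"

definition U_n1 :: "nat \<Rightarrow> complex mat set" where
  "U_n1 n = {U. U \<in> carrier_mat (n+1) (n+1) \<and>
                U * J_mat n * transpose_mat (map_mat cnj U) = J_mat n}"

definition diag_c :: "nat \<Rightarrow> (nat \<Rightarrow> complex) \<Rightarrow> complex mat" where
  "diag_c n d = mat (n+1) (n+1) (\<lambda>(i,j). if i = j then d i else 0)"

end

theory Submission
  imports Defs "Jordan_Normal_Form.Determinant"
begin

text \<open>Put \<open>M = U D U^t = c D'\<close> for the two diagonal matrices \<open>D\<close>, \<open>D'\<close>. Since \<open>U\<close> preserves
  the Hermitian form \<open>J\<close>, so does \<open>U^t\<close> up to complex conjugation, hence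
  \<open>M J M^H = U (D J D) U^H\<close>; on the other hand \<open>M J M^H = |c|^2 D' J D'\<close>. As \<open>U J U^H = J\<close> and
  \<open>|det U| = 1\<close>, the matrices \<open>D J D - t J\<close> and \<open>|c|^2 D' J D' - t J\<close> have the same determinant
  for every \<open>t\<close>: the squares \<open>\<lambda>^2, \<lambda>\<^sub>2^2, \<dots>, \<lambda>\<^sub>n\<^sub>+\<^sub>1^2\<close> and \<open>|c|^2 \<lambda>\<^sub>1^2, \<dots>, |c|^2 \<lambda>\<^sub>n\<^sub>+\<^sub>1^2\<close>
  have the same characteristic polynomial. Its constant term gives \<open>\<lambda>^2 = |c|^(2n+2) \<lambda>\<^sub>1^2\<close>, so
  \<open>|c| < 1\<close>; but then the root \<open>\<lambda>\<^sub>n\<^sub>+\<^sub>1^2\<close> exceeds every \<open>|c|^2 \<lambda>\<^sub>i^2\<close>.\<close>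

abbreviation adjoint_mat :: "complex mat \<Rightarrow> complex mat" where
  "adjoint_mat A \<equiv> transpose_mat (map_mat cnj A)"

lemma diag_c_carrier [simp]: "diag_c n d \<in> carrier_mat (n+1) (n+1)"
  by (simp add: diag_c_def)

lemma dim_diag_c [simp]: "dim_row (diag_c n d) = n+1" "dim_col (diag_c n d) = n+1"
  by (simp_all add: diag_c_def)

lemma diag_c_mult: "diag_c n a * diag_c n b = diag_c n (\<lambda>i. a i * b i)"
proof (rule eq_matI)
  fix i j assume "i < dim_row (diag_c n (\<lambda>i. a i * b i))" "j < dim_col (diag_c n (\<lambda>i. a i * b i))"
  then have "i < n+1" "j < n+1" by simp_all
  then show "(diag_c n a * diag_c n b) $$ (i, j) = diag_c n (\<lambda>i. a i * b i) $$ (i, j)"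
    by (simp add: diag_c_def scalar_prod_def if_distrib[of "\<lambda>x. x * _"] sum.delta cong: if_cong)
qed auto

lemma smult_diag_c: "c \<cdot>\<^sub>m diag_c n a = diag_c n (\<lambda>i. c * a i)"
  by (rule eq_matI) (auto simp: diag_c_def)

lemma diag_c_minus: "diag_c n a - diag_c n b = diag_c n (\<lambda>i. a i - b i)"
  by (rule eq_matI) (auto simp: diag_c_def)

lemma transpose_diag_c: "transpose_mat (diag_c n a) = diag_c n a"
  by (rule eq_matI) (auto simp: diag_c_def)

lemma map_mat_diag_c: "f 0 = 0 \<Longrightarrow> map_mat f (diag_c n a) = diag_c n (\<lambda>i. f (a i))"
  by (rule eq_matI) (auto simp: diag_c_def)

lemma diag_c_one: "diag_c n (\<lambda>_. 1) = 1\<^sub>m (n+1)"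
  by (rule eq_matI) (auto simp: diag_c_def)

lemma det_diag_c: "det (diag_c n a) = (\<Prod>i<n+1. a i)"
proof -
  have "det (diag_c n a) = prod_list (diag_mat (diag_c n a))"
    by (rule det_upper_triangular[of _ "n+1"]) (auto simp: upper_triangular_def diag_c_def)
  also have "diag_mat (diag_c n a) = map a [0..<n+1]"
    by (auto simp: diag_mat_def diag_c_def)
  finally show ?thesis
    by (metis atLeast0LessThan distinct_upt prod.distinct_set_conv_list set_upt)
qed

lemma J_mat_eq_diag_c: "J_mat n = diag_c n (\<lambda>i. if i = n then -1 else 1)"
  by (rule eq_matI) (auto simp: J_mat_def diag_c_def)

lemma J_mat_carrier: "J_mat n \<in> carrier_mat (n+1) (n+1)"
  unfolding J_mat_eq_diag_c by (rule diag_c_carrier)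

lemma J_mat_mult_J_mat: "J_mat n * J_mat n = 1\<^sub>m (n+1)"
  unfolding J_mat_eq_diag_c diag_c_mult diag_c_one[symmetric] by (rule arg_cong[where f="diag_c n"]) auto

lemma map_mat_cnj_J_mat: "map_mat cnj (J_mat n) = J_mat n"
  by (rule eq_matI) (auto simp: J_mat_def)

lemma prod_J_sign: "(\<Prod>i<n+1. (if i = n then -1 else 1) * x i) = - (\<Prod>i<n+1. x i :: complex)"
  for n :: nat
proof -
  have "(\<Prod>i<n. if i = n then -1 else 1 :: complex) = 1"
    by (rule prod.neutral) auto
  then show ?thesis by (simp add: prod.distrib)
qed

lemma det_J_mat: "det (J_mat n) = -1"
  using prod_J_sign[of n "\<lambda>_. 1"] by (simp add: J_mat_eq_diag_c det_diag_c)

lemma map_mat_cnj_mult: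
  "A \<in> carrier_mat n m \<Longrightarrow> B \<in> carrier_mat m k \<Longrightarrow>
   map_mat cnj (A * B) = map_mat cnj A * map_mat cnj B"
  by (rule eq_matI) (auto simp: scalar_prod_def cnj_sum)

lemma map_mat_transpose: "map_mat f (transpose_mat A) = transpose_mat (map_mat f A)"
  by (rule eq_matI) auto

lemma map_mat_cnj_cnj [simp]: "map_mat cnj (map_mat cnj A) = A"
  by (rule eq_matI) auto

lemma det_congruence:
  assumes "U \<in> carrier_mat N N" "X \<in> carrier_mat N N" "V \<in> carrier_mat N N"
    and "det U * det V = 1"
  shows "det (U * X * V) = det X"
proof -
  have "det (U * X * V) = (det U * det V) * det X"
    using assms(1-3) by (simp add: det_mult[of _ N] ac_simps)
  then show ?thesis using assms(4) by simp
qed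

text \<open>\<open>J U\<^sup>H J\<close> is a right, hence a left inverse of \<open>U\<close>.\<close>
lemma pseudo_unitary_adjoint_left:
  fixes U J :: "complex mat"
  assumes U: "U \<in> carrier_mat N N" and J: "J \<in> carrier_mat N N"
    and JJ: "J * J = 1\<^sub>m N" and UJ: "U * J * adjoint_mat U = J"
  shows "adjoint_mat U * J * U = J"
proof -
  have UH: "adjoint_mat U \<in> carrier_mat N N" using U by simp
  have "U * (J * adjoint_mat U * J) = (U * J * adjoint_mat U) * J"
    using U UH J by (simp add: assoc_mult_mat[of _ N N _ N _ N])
  then have "U * (J * adjoint_mat U * J) = 1\<^sub>m N" using UJ JJ by simp
  then have inv: "(J * adjoint_mat U * J) * U = 1\<^sub>m N"
    by (intro mat_mult_left_right_inverse[OF U]) (use UH J in auto)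
  have "J * J * (adjoint_mat U * J * U) = J * ((J * adjoint_mat U * J) * U)"
    using U UH J by (simp add: assoc_mult_mat[of _ N N _ N _ N])
  then show ?thesis using inv JJ UH J U by simp
qed

lemma pseudo_unitary_transpose:
  fixes U J :: "complex mat"
  assumes U: "U \<in> carrier_mat N N" and J: "J \<in> carrier_mat N N"
    and JJ: "J * J = 1\<^sub>m N" and real: "map_mat cnj J = J"
    and UJ: "U * J * adjoint_mat U = J"
  shows "transpose_mat U * J * map_mat cnj U = J"
proof -
  have "map_mat cnj (adjoint_mat U * J * U) = transpose_mat U * J * map_mat cnj U"
    using U J by (simp add: map_mat_cnj_mult[of _ N N _ N] map_mat_transpose real)
  then show ?thesis
    using pseudo_unitary_adjoint_left[OF assms(1-3) UJ] real by simp
qed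

lemma det_pseudo_unitary:
  fixes U J :: "complex mat"
  assumes U: "U \<in> carrier_mat N N" and J: "J \<in> carrier_mat N N"
    and "det J \<noteq> 0" and "U * J * adjoint_mat U = J"
  shows "det U * det (adjoint_mat U) = 1"
proof -
  have "adjoint_mat U \<in> carrier_mat N N" using U by simp
  then have "det U * det J * det (adjoint_mat U) = det J"
    using assms by (metis det_mult[of _ N] mult_carrier_mat)
  then show ?thesis using \<open>det J \<noteq> 0\<close> by (simp add: mult.commute mult.left_commute)
qed

lemma adjoint_mat_mult:
  "A \<in> carrier_mat n m \<Longrightarrow> B \<in> carrier_mat m k \<Longrightarrow>
   adjoint_mat (A * B) = adjoint_mat B * adjoint_mat A"
  by (simp add: map_mat_cnj_mult transpose_mult[of _ n m _ k])

lemma congruence_transpose_J_adjoint: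
  fixes U J D :: "complex mat"
  assumes U: "U \<in> carrier_mat N N" and J: "J \<in> carrier_mat N N" and D: "D \<in> carrier_mat N N"
    and UJ: "transpose_mat U * J * map_mat cnj U = J"
    and sym: "transpose_mat D = D" and real: "map_mat cnj D = D"
  shows "(U * D * transpose_mat U) * J * adjoint_mat (U * D * transpose_mat U)
    = U * (D * J * D) * adjoint_mat U"
proof -
  have "adjoint_mat (U * D * transpose_mat U) = map_mat cnj U * D * adjoint_mat U"
    using U D by (simp add: adjoint_mat_mult[of _ N N _ N] map_mat_transpose sym real
        assoc_mult_mat[of _ N N _ N _ N])
  then have "(U * D * transpose_mat U) * J * adjoint_mat (U * D * transpose_mat U)
      = U * (D * (transpose_mat U * J * map_mat cnj U) * D) * adjoint_mat U"
    using U J D by (simp add: assoc_mult_mat[of _ N N _ N _ N])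
  then show ?thesis using UJ by simp
qed

lemma mult_minus_smult_mult_mat:
  fixes A B U V :: "'a :: comm_ring mat"
  assumes U: "U \<in> carrier_mat N N" and A: "A \<in> carrier_mat N N"
    and B: "B \<in> carrier_mat N N" and V: "V \<in> carrier_mat N N"
  shows "U * (A - k \<cdot>\<^sub>m B) * V = U * A * V - k \<cdot>\<^sub>m (U * B * V)"
proof -
  have "U * (A - k \<cdot>\<^sub>m B) * V = (U * A - k \<cdot>\<^sub>m (U * B)) * V"
    using U A B by (simp add: mult_minus_distrib_mat[of _ N N] mult_smult_distrib[of _ N N])
  also have "\<dots> = U * A * V - k \<cdot>\<^sub>m (U * B * V)"
    using U A B V by (simp add: minus_mult_distrib_mat[of _ N N] mult_smult_assoc_mat[of _ N N])
  finally show ?thesis .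
qed

lemma U_n1_carrier: "U \<in> U_n1 n \<Longrightarrow> U \<in> carrier_mat (n+1) (n+1)"
  by (simp add: U_n1_def)

lemma U_n1_transpose: "U \<in> U_n1 n \<Longrightarrow> transpose_mat U * J_mat n * map_mat cnj U = J_mat n"
  using pseudo_unitary_transpose[OF _ J_mat_carrier J_mat_mult_J_mat map_mat_cnj_J_mat]
  unfolding U_n1_def by blast

lemma det_U_n1: "U \<in> U_n1 n \<Longrightarrow> det U * det (adjoint_mat U) = 1"
  using det_pseudo_unitary[OF _ J_mat_carrier] det_J_mat unfolding U_n1_def by fastforce

lemma U_n1_diag_congruence:
  fixes d e :: "nat \<Rightarrow> real"
  assumes U: "U \<in> U_n1 n"
    and eq: "U * diag_c n (\<lambda>i. of_real (d i)) * transpose_mat U = c \<cdot>\<^sub>m diag_c n (\<lambda>i. of_real (e i))"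
  shows "U * (diag_c n (\<lambda>i. of_real (d i)) * J_mat n * diag_c n (\<lambda>i. of_real (d i))) * adjoint_mat U
    = diag_c n (\<lambda>i. (if i = n then -1 else 1) * of_real ((cmod c)\<^sup>2 * (e i)\<^sup>2))"
proof -
  let ?D = "diag_c n (\<lambda>i. complex_of_real (d i))"
  let ?E = "diag_c n (\<lambda>i. complex_of_real (e i))"
  have "(U * ?D * transpose_mat U) * J_mat n * adjoint_mat (U * ?D * transpose_mat U)
      = U * (?D * J_mat n * ?D) * adjoint_mat U"
    by (rule congruence_transpose_J_adjoint[OF U_n1_carrier[OF U] J_mat_carrier diag_c_carrier
        U_n1_transpose[OF U] transpose_diag_c]) (simp add: map_mat_diag_c)
  then have "U * (?D * J_mat n * ?D) * adjoint_mat U = (c \<cdot>\<^sub>m ?E) * J_mat n * adjoint_mat (c \<cdot>\<^sub>m ?E)"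
    by (simp only: eq)
  also have "\<dots> = diag_c n (\<lambda>i. (if i = n then -1 else 1) * of_real ((cmod c)\<^sup>2 * (e i)\<^sup>2))"
  proof -
    have entry: "c * of_real x * s * cnj (c * of_real x) = s * of_real ((cmod c)\<^sup>2 * x\<^sup>2)"
      for x :: real and s :: complex
    proof -
      have "c * of_real x * s * cnj (c * of_real x) = s * (c * cnj c) * of_real (x\<^sup>2)"
        by (simp add: power2_eq_square algebra_simps)
      then show ?thesis by (simp add: complex_norm_square[symmetric])
    qed
    show ?thesis
      unfolding J_mat_eq_diag_c smult_diag_c map_mat_diag_c[of cnj, OF complex_cnj_zero]
        transpose_diag_c diag_c_mult entry ..
  qed
  finally show ?thesis .
qed

lemma U_n1_diag_char_poly:
  fixes d e :: "nat \<Rightarrow> real"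
  assumes U: "U \<in> U_n1 n"
    and eq: "U * diag_c n (\<lambda>i. of_real (d i)) * transpose_mat U = c \<cdot>\<^sub>m diag_c n (\<lambda>i. of_real (e i))"
  shows "(\<Prod>i<n+1. (d i)\<^sup>2 - t) = (\<Prod>i<n+1. (cmod c)\<^sup>2 * (e i)\<^sup>2 - t)"
proof -
  let ?s = "\<lambda>i. if i = n then -1 else 1 :: complex"
  let ?D = "diag_c n (\<lambda>i. complex_of_real (d i))"
  let ?X = "?D * J_mat n * ?D - of_real t \<cdot>\<^sub>m J_mat n"
  have Uc: "U \<in> carrier_mat (n+1) (n+1)" using U by (rule U_n1_carrier)
  have UJ: "U * J_mat n * adjoint_mat U = J_mat n" using U by (simp add: U_n1_def)
  have "U * ?X * adjoint_mat U
      = U * (?D * J_mat n * ?D) * adjoint_mat U - of_real t \<cdot>\<^sub>m (U * J_mat n * adjoint_mat U)"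
    using Uc J_mat_carrier by (intro mult_minus_smult_mult_mat) auto
  also have "\<dots> = diag_c n (\<lambda>i. ?s i * of_real ((cmod c)\<^sup>2 * (e i)\<^sup>2 - t))"
    unfolding U_n1_diag_congruence[OF U eq] UJ unfolding J_mat_eq_diag_c smult_diag_c diag_c_minus
    by (rule arg_cong[where f = "diag_c n"]) (auto simp: algebra_simps)
  finally have congr: "U * ?X * adjoint_mat U = diag_c n (\<lambda>i. ?s i * of_real ((cmod c)\<^sup>2 * (e i)\<^sup>2 - t))" .
  have "?X \<in> carrier_mat (n+1) (n+1)"
    by (intro minus_carrier_mat mult_carrier_mat smult_carrier_mat J_mat_carrier diag_c_carrier)
  from det_congruence[OF Uc this _ det_U_n1[OF U]] Uc congr
  have "det ?X = det (diag_c n (\<lambda>i. ?s i * of_real ((cmod c)\<^sup>2 * (e i)\<^sup>2 - t)))" by auto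
  moreover have "?X = diag_c n (\<lambda>i. ?s i * of_real ((d i)\<^sup>2 - t))"
    unfolding J_mat_eq_diag_c smult_diag_c diag_c_mult diag_c_minus
    by (rule arg_cong[where f = "diag_c n"]) (auto simp: power2_eq_square algebra_simps)
  ultimately have "complex_of_real (\<Prod>i<n+1. (d i)\<^sup>2 - t)
      = complex_of_real (\<Prod>i<n+1. (cmod c)\<^sup>2 * (e i)\<^sup>2 - t)"
    by (simp only: det_diag_c prod_J_sign of_real_prod neg_equal_iff_equal)
  then show ?thesis by (simp only: of_real_eq_iff)
qed

lemma char_poly_ne_rescaled:
  fixes a b :: "nat \<Rightarrow> real" and s :: real
  assumes k: "0 < k" "k < N" and s: "0 \<le> s"
    and less: "a 0 < b 0"
    and same: "\<And>i. 0 < i \<Longrightarrow> i < N \<Longrightarrow> a i = b i"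
    and pos: "\<And>i. i < N \<Longrightarrow> 0 < b i"
    and max: "\<And>i. i < N \<Longrightarrow> b i \<le> b k"
  shows "\<not> (\<forall>t. (\<Prod>i<N. a i - t) = (\<Prod>i<N. s * b i - t))"
proof
  assume eq: "\<forall>t. (\<Prod>i<N. a i - t) = (\<Prod>i<N. s * b i - t)"
  define P where "P = (\<Prod>i\<in>{..<N} - {0}. b i)"
  have "0 < P" unfolding P_def by (rule prod_pos) (use pos in auto)
  have "0 \<in> {..<N}" using k by simp
  moreover have "(\<Prod>i\<in>{..<N} - {0}. a i) = P"
    unfolding P_def by (rule prod.cong) (auto intro: same)
  ultimately have "(\<Prod>i<N. a i) = a 0 * P" and "(\<Prod>i<N. b i) = b 0 * P"
    unfolding P_def by (simp_all add: prod.remove)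
  moreover have "(\<Prod>i<N. a i) = s ^ N * (\<Prod>i<N. b i)"
    using spec[OF eq, of 0] by (simp add: prod.distrib)
  ultimately have "a 0 = s ^ N * b 0" using \<open>0 < P\<close> by simp
  with less pos[of 0] k have "s ^ N < 1" by simp
  then have "s < 1" using s by (meson not_less one_le_power)
  have "s * b i - b k < 0" if "i < N" for i
    using mult_strict_right_mono[OF \<open>s < 1\<close> pos[OF that]] max[OF that] by simp
  then have "(\<Prod>i<N. s * b i - b k) \<noteq> 0" by (simp add: prod_zero_iff) force
  moreover have "(\<Prod>i<N. a i - b k) = 0" using k same by (intro prod_zero) auto
  ultimately show False using spec[OF eq, of "b k"] by simp
qed

theorem mainTheorem7:
  fixes n :: nat and lam :: real and l :: "nat \<Rightarrow> real"
  assumes "n \<ge> 1"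
    and "\<bar>lam\<bar> < \<bar>l 1\<bar>"
    and "\<forall>i\<in>{1..n}. \<bar>l i\<bar> \<le> \<bar>l (i+1)\<bar>"
  shows "\<not> (\<exists>U \<in> U_n1 n. \<exists>c :: complex.
    U * diag_c n (\<lambda>i. if i = 0 then complex_of_real lam else complex_of_real (l (i+1)))
      * transpose_mat U
    = c \<cdot>\<^sub>m diag_c n (\<lambda>i. complex_of_real (l (i+1))))"
proof
  let ?d = "\<lambda>i. if i = 0 then lam else l (i+1)"
  assume "\<exists>U \<in> U_n1 n. \<exists>c :: complex.
    U * diag_c n (\<lambda>i. if i = 0 then complex_of_real lam else complex_of_real (l (i+1)))
      * transpose_mat U
    = c \<cdot>\<^sub>m diag_c n (\<lambda>i. complex_of_real (l (i+1)))"
  then obtain U c where U: "U \<in> U_n1 n" and eq: "U * diag_c n (\<lambda>i. of_real (?d i)) * transpose_mat U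
      = c \<cdot>\<^sub>m diag_c n (\<lambda>i. of_real (l (i+1)))"
    by (auto simp: if_distrib[of complex_of_real])
  have mono: "\<bar>l i\<bar> \<le> \<bar>l j\<bar>" if "1 \<le> i" "i \<le> j" "j \<le> n+1" for i j
    using lift_Suc_mono_le_ivl[of "{1..n}" "\<lambda>i. \<bar>l i\<bar>" i j] assms(3) that by force
  have "\<not> (\<forall>t. (\<Prod>i<n+1. (?d i)\<^sup>2 - t) = (\<Prod>i<n+1. (cmod c)\<^sup>2 * (l (i+1))\<^sup>2 - t))"
  proof (rule char_poly_ne_rescaled[where k = n])
    show "(?d 0)\<^sup>2 < (l (0+1))\<^sup>2"
      using assms(2) abs_le_square_iff[of "l 1" lam] by simp
    show "0 < (l (i+1))\<^sup>2" if "i < n+1" for i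
      using assms(2) mono[of 1 "i+1"] that by auto
    show "(l (i+1))\<^sup>2 \<le> (l (n+1))\<^sup>2" if "i < n+1" for i
      using mono[of "i+1" "n+1"] that by (simp add: abs_le_square_iff)
  qed (use assms(1) in auto)
  then show False using U_n1_diag_char_poly[OF U eq] by blast
qed

end
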